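(* Let $\theta,\theta_1>0$ and let $D_n=\lambda^{-1}\sum_{j=0}^{n-1}\big(-N+\sum_{i=1}^MN_i(t_j-h_i)\big)$. Assume that for all $i=1,\dots,M$ and all $0<n\le n_T$, $$\Big|\lambda^{-1}\sum_{j=-n_i}^{0\wedge(n-n_i)}(N_i(t_j)-p_iN)\Big|<\theta_1 .$$ Then $$\mathbb{P}\Big(\sup_{0<n\le n_T}|D_n|\ge M\theta+M\theta_1\Big)\le 2M\exp\Big(-\frac{\theta^2}{32T\epsilon}\Big).$$
   Context: Fix $\epsilon>0$, an integer $N\ge1$, $\lambda:=N/\epsilon$, $t_n:=n\epsilon$, $T>0$ with $n_T:=T\epsilon^{-1}$ an integer. Fix $M\ge1$, positive reals $h_1<\dots<h_M$ each an integer multiple of $\epsilon$, $n_i:=h_i/\epsilon$, and probabilities $p_1,\dots,p_M>0$ summing to $1$. At each time $t_n$ exactly $N$ vertices arrive, each independently of Type $i$ with probability $p_i$; $N_i(t_n)$ is the number of Type $i$ arrivals at $t_n$, so for $n\ge0$ the vectors $(N_1(t_n),\dots,N_M(t_n))$ are independent multinomial$(N;p_1,\dots,p_M)$ (in particular $N_i(t_n)\sim\mathrm{Binomial}(N,p_i)$, $\sum_iN_i(t_n)=N$). For $n<0$ the values $N_i(t_n)$ are given initial data. *)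

theory Defs
  imports "HOL-Probability.Probability"
begin

definition type_pmf :: "nat \<Rightarrow> (nat \<Rightarrow> real) \<Rightarrow> nat pmf" where
  "type_pmf M p = embed_pmf (\<lambda>i. if i \<in> {1..M} then p i else 0)"

text \<open>Outcome omega (n,k) = type of the k-th vertex arriving at t_n.
  (Arrivals at times t_n with n >= n_T never enter the statement.)\<close>
definition arrival_space :: "nat \<Rightarrow> nat \<Rightarrow> nat \<Rightarrow> (nat \<Rightarrow> real) \<Rightarrow> (nat \<times> nat \<Rightarrow> nat) pmf" where
  "arrival_space nT N M p = Pi_pmf ({0..<nT} \<times> {0..<N}) 0 (\<lambda>_. type_pmf M p)"

definition Ncount :: "nat \<Rightarrow> (nat \<Rightarrow> int \<Rightarrow> nat) \<Rightarrow> (nat \<times> nat \<Rightarrow> nat) \<Rightarrow> nat \<Rightarrow> int \<Rightarrow> nat" where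
  "Ncount N init \<omega> i n =
     (if n < 0 then init i n else card {k. k < N \<and> \<omega> (nat n, k) = i})"

text \<open>D_n = lambda^{-1} sum_{j=0}^{n-1} (-N + sum_i N_i(t_j - h_i)), with t_j - h_i = t_{j - n_i}.\<close>
definition Dproc :: "real \<Rightarrow> nat \<Rightarrow> nat \<Rightarrow> (nat \<Rightarrow> nat) \<Rightarrow> (nat \<Rightarrow> int \<Rightarrow> nat)
    \<Rightarrow> (nat \<times> nat \<Rightarrow> nat) \<Rightarrow> nat \<Rightarrow> real" where
  "Dproc \<epsilon> N M nn init \<omega> n =
     inverse (real N / \<epsilon>) *
       (\<Sum>j<n. - real N + (\<Sum>i=1..M. real (Ncount N init \<omega> i (int j - int (nn i)))))"

end

(* Write D_n as the sum over types i of lambda^-1 times the centred counts N_i(t_j) - p_i N over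
   the window -n_i <= j < n - n_i.  The part of the window at negative times is initial data: by
   hypothesis it is below theta_1, up to one boundary term of size at most epsilon.  The part at
   nonnegative times is a prefix sum, in order of arrival, of the iid centred indicators
   [vertex has Type i] - p_i.  Hence if epsilon <= theta/4 and |D_n| >= M theta + M theta_1, some
   type has a prefix sum of absolute value at least 3 theta lambda / 4.  Hoeffding's lemma and a
   Doob-type maximal inequality for exp (l S_k) bound each of these 2M events (type and sign) by
   exp (-9 theta^2 N / (8 T epsilon)), which is stronger than claimed.  If theta < 4 epsilon the
   claimed bound is at least 1. *)

theory Submission
  imports Defs
begin

lemma product_append: "List.product (xs @ ys) zs = List.product xs zs @ List.product ys zs"
  by (simp add: product_concat_map)

lemma set_take_product_upt:
  assumes "m \<le> n"
  shows "set (take (m * k) (List.product [0..<n] [0..<k])) = {..<m} \<times> {..<k}"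
proof -
  have "[0..<n] = [0..<m] @ [m..<n]"
    using upt_add_eq_append[of 0 m "n - m"] assms by simp
  then have "List.product [0..<n] [0..<k] = List.product [0..<m] [0..<k] @ List.product [m..<n] [0..<k]"
    by (simp flip: product_append)
  then show ?thesis by (simp add: atLeast0LessThan)
qed

lemma sum_lessThan_shift_int:
  fixes f :: "int \<Rightarrow> 'a::comm_monoid_add"
  shows "(\<Sum>j<n. f (int j - int k)) = (\<Sum>j\<in>{- int k..<int n - int k}. f j)"
  by (rule sum.reindex_bij_witness[where i="\<lambda>j. nat (j + int k)" and j="\<lambda>j. int j - int k"]) auto

lemma abs_sum_halfopen_window_less:
  fixes G :: "int \<Rightarrow> real" and k n :: nat
  assumes "1 \<le> n" and G_lower: "\<And>j. - e \<le> G j" and G_upper: "\<And>j. 0 \<le> j \<Longrightarrow> G j \<le> e"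
    and closed: "\<And>m. 0 < m \<Longrightarrow> m \<le> n \<Longrightarrow> \<bar>\<Sum>j\<in>{- int k..min 0 (int m - int k)}. G j\<bar> < t"
  shows "\<bar>\<Sum>j\<in>{- int k..<min 0 (int n - int k)}. G j\<bar> < t + e"
proof -
  let ?r = "min 0 (int n - int k)"
  have split: "(\<Sum>j\<in>{- int k..?r}. G j) = G ?r + (\<Sum>j\<in>{- int k..<?r}. G j)"
  proof -
    have "{- int k..?r} = insert ?r {- int k..<?r}" by auto
    then show ?thesis by simp
  qed
  have closed_n: "\<bar>\<Sum>j\<in>{- int k..?r}. G j\<bar> < t" using closed \<open>1 \<le> n\<close> by simp
  have "e \<ge> 0" using G_lower[of 0] G_upper[of 0] by simp
  show ?thesis
  proof (cases "k < n")
    case True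
    then have "\<bar>G ?r\<bar> \<le> e" using G_lower[of 0] G_upper[of 0] by simp
    then show ?thesis using split closed_n by linarith
  next
    case False
    have upper: "(\<Sum>j\<in>{- int k..<?r}. G j) < t + e" using split closed_n G_lower[of ?r] by linarith
    txt \<open>Now ?r \<le> 0, where G has no upper bound, so the lower bound comes from the closed
      window ending at n - 1 instead.\<close>
    have "- t - e < (\<Sum>j\<in>{- int k..<?r}. G j)"
    proof (cases "n = 1")
      case True
      then have "{- int k..<?r} = {- int k}" using False by auto
      moreover have "0 < t" using closed_n by linarith
      ultimately show ?thesis using G_lower[of "- int k"] by simp
    next
      case False
      have "{- int k..<?r} = {- int k..min 0 (int (n - 1) - int k)}"
        using \<open>\<not> k < n\<close> \<open>1 \<le> n\<close> by auto
      then show ?thesis using closed[of "n - 1"] False \<open>1 \<le> n\<close> \<open>e \<ge> 0\<close> by fastforce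
    qed
    with upper show ?thesis by linarith
  qed
qed

lemma exists_abs_summand_ge:
  fixes x y :: "'a \<Rightarrow> real"
  assumes "finite I" and "I \<noteq> {}" and x_bound: "\<And>i. i \<in> I \<Longrightarrow> \<bar>x i\<bar> \<le> \<alpha>"
    and sum_large: "real (card I) * (\<alpha> + \<beta>) \<le> \<bar>\<Sum>i\<in>I. x i + y i\<bar>"
  shows "\<exists>i\<in>I. \<beta> \<le> \<bar>y i\<bar>"
proof (rule ccontr)
  assume "\<not> (\<exists>i\<in>I. \<beta> \<le> \<bar>y i\<bar>)"
  then have "\<bar>x i + y i\<bar> < \<alpha> + \<beta>" if "i \<in> I" for i
    using x_bound[OF that] that by (auto intro: order.strict_trans1[OF abs_triangle_ineq])
  then have "(\<Sum>i\<in>I. \<bar>x i + y i\<bar>) < (\<Sum>i\<in>I. \<alpha> + \<beta>)"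
    using assms(1,2) by (intro sum_strict_mono) auto
  then show False using sum_abs[of "\<lambda>i. x i + y i" I] sum_large by simp
qed

section \<open>Hoeffding's maximal inequality\<close>

lemma vimage_fun_upd_prefix_sum_ge:
  fixes g :: "'b \<Rightarrow> real" and x a :: real
  assumes "v \<notin> set xs" and "x < a"
  shows "(\<lambda>f. f(v := y)) -` {\<omega>. \<exists>n. a \<le> x + (\<Sum>u\<in>set (take n (v # xs)). g (\<omega> u))}
       = {\<omega>. \<exists>n. a \<le> (x + g y) + (\<Sum>u\<in>set (take n xs). g (\<omega> u))}"
proof -
  have take_Suc: "(\<Sum>u\<in>set (take (Suc n) (v # xs)). g ((f(v := y)) u))
      = g y + (\<Sum>u\<in>set (take n xs). g (f u))" for f n
  proof -
    have v: "v \<notin> set (take n xs)" using assms(1) by (auto dest: in_set_takeD)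
    then have "(\<Sum>u\<in>set (take n xs). g ((f(v := y)) u)) = (\<Sum>u\<in>set (take n xs). g (f u))"
      by (intro sum.cong) auto
    then show ?thesis using v by simp
  qed
  have ex_Suc: "(\<exists>n. P n) \<longleftrightarrow> P 0 \<or> (\<exists>n. P (Suc n))" for P by (metis not0_implies_Suc)
  have "(\<exists>n. a \<le> x + (\<Sum>u\<in>set (take n (v # xs)). g ((f(v := y)) u)))
      \<longleftrightarrow> (\<exists>n. a \<le> x + (\<Sum>u\<in>set (take (Suc n) (v # xs)). g ((f(v := y)) u)))" for f
    using ex_Suc[of "\<lambda>n. a \<le> x + (\<Sum>u\<in>set (take n (v # xs)). g ((f(v := y)) u))"] \<open>x < a\<close>
    by simp
  then show ?thesis unfolding take_Suc by (simp add: add.assoc)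
qed

(* Doob's maximal inequality for the exponential of the prefix sums, proved by conditioning on
   the first coordinate; B >= 1 absorbs the steps after the threshold has been crossed. *)
lemma emeasure_Pi_pmf_prefix_sum_ge:
  fixes g :: "'b \<Rightarrow> real" and q :: "'b pmf" and xs :: "'a list"
  assumes "distinct xs" and "set xs \<subseteq> A" and "finite A" and "l \<ge> 0" and "B \<ge> 1"
    and mgf: "(\<integral>\<^sup>+y. ennreal (exp (l * g y)) \<partial>q) \<le> ennreal B"
  shows "emeasure (Pi_pmf A d (\<lambda>_. q)) {\<omega>. \<exists>n. a \<le> x + (\<Sum>u\<in>set (take n xs). g (\<omega> u))}
           \<le> ennreal (exp (l * (x - a)) * B ^ length xs)"
proof -
  have crossed: "emeasure (Pi_pmf A' d (\<lambda>_. q)) S \<le> ennreal (exp (l * (x' - a)) * B ^ k)"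
    if "a \<le> x'" for A' S x' k
  proof -
    have "1 * 1 \<le> exp (l * (x' - a)) * B ^ k"
      using that \<open>l \<ge> 0\<close> \<open>B \<ge> 1\<close> by (intro mult_mono one_le_power) (auto intro: mult_nonneg_nonneg)
    then have "1 \<le> ennreal (exp (l * (x' - a)) * B ^ k)" by simp
    with measure_pmf.emeasure_le_1 show ?thesis by (rule order.trans)
  qed
  show ?thesis
    using assms(1-3)
  proof (induction xs arbitrary: A x)
    case Nil
    show ?case
    proof (cases "a \<le> x")
      case True
      then show ?thesis by (rule crossed)
    qed simp
  next
    case (Cons v xs)
    let ?E = "{\<omega>. \<exists>n. a \<le> x + (\<Sum>u\<in>set (take n (v # xs)). g (\<omega> u))}"
    define A' where "A' = A - {v}"
    have A': "A = insert v A'" "v \<notin> A'" "finite A'" "set xs \<subseteq> A'" "distinct xs"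
      using Cons.prems by (auto simp: A'_def)
    show ?case
    proof (cases "a \<le> x")
      case True
      then show ?thesis by (rule crossed)
    next
      case False
      have "emeasure (Pi_pmf A d (\<lambda>_. q)) ?E
          = (\<integral>\<^sup>+y. emeasure (Pi_pmf A' d (\<lambda>_. q)) ((\<lambda>f. f(v := y)) -` ?E) \<partial>q)"
        using A' by (simp add: Pi_pmf_insert' map_pmf_def[symmetric])
      also have "\<dots> \<le> (\<integral>\<^sup>+y. ennreal (exp (l * (x - a)) * B ^ length xs) * ennreal (exp (l * g y)) \<partial>q)"
      proof (rule nn_integral_mono)
        fix y
        have "emeasure (Pi_pmf A' d (\<lambda>_. q)) ((\<lambda>f. f(v := y)) -` ?E)
            \<le> ennreal (exp (l * (x + g y - a)) * B ^ length xs)"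
          using Cons.prems(1) False A'
          by (subst vimage_fun_upd_prefix_sum_ge) (auto intro: Cons.IH)
        also have "exp (l * (x + g y - a)) = exp (l * (x - a)) * exp (l * g y)"
          by (simp add: algebra_simps flip: exp_add)
        finally show "emeasure (Pi_pmf A' d (\<lambda>_. q)) ((\<lambda>f. f(v := y)) -` ?E)
            \<le> ennreal (exp (l * (x - a)) * B ^ length xs) * ennreal (exp (l * g y))"
          using \<open>B \<ge> 1\<close> by (simp add: ennreal_mult' mult_ac)
      qed
      also have "\<dots> = ennreal (exp (l * (x - a)) * B ^ length xs) * (\<integral>\<^sup>+y. ennreal (exp (l * g y)) \<partial>q)"
        by (rule nn_integral_cmult) simp
      also have "\<dots> \<le> ennreal (exp (l * (x - a)) * B ^ length xs) * ennreal B"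
        by (intro mult_left_mono mgf) simp
      also have "\<dots> = ennreal (exp (l * (x - a)) * B ^ length (v # xs))"
        using \<open>B \<ge> 1\<close> by (simp add: ennreal_mult'[symmetric] mult_ac)
      finally show ?thesis .
    qed
  qed
qed

lemma prob_Pi_pmf_prefix_sum_ge_Hoeffding:
  fixes g :: "'b \<Rightarrow> real" and q :: "'b pmf" and xs :: "'a list" and a b t :: real
  assumes "distinct xs" and "set xs \<subseteq> A" and "finite A" and "xs \<noteq> []"
    and range: "\<And>y. g y \<in> {a..b}" and "a < b" and "t > 0"
  shows "measure_pmf.prob (Pi_pmf A d (\<lambda>_. q))
           {\<omega>. \<exists>n. t \<le> (\<Sum>u\<in>set (take n xs). g (\<omega> u) - measure_pmf.expectation q g)}
         \<le> exp (- (2 * t\<^sup>2 / (real (length xs) * (b - a)\<^sup>2)))"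
proof -
  interpret interval_bounded_random_variable q g a b
    using range by unfold_locales (simp_all add: AE_I2)
  define L where "L = real (length xs)"
  define w where "w = (b - a)\<^sup>2"
  define l where "l = 4 * t / (L * w)" \<comment> \<open>the optimal Chernoff parameter\<close>
  have "L > 0" "w > 0" using \<open>xs \<noteq> []\<close> \<open>a < b\<close> by (auto simp: L_def w_def)
  then have "l > 0" using \<open>t > 0\<close> by (simp add: l_def)
  have mgf: "(\<integral>\<^sup>+y. ennreal (exp (l * (g y - measure_pmf.expectation q g))) \<partial>q) \<le> ennreal (exp (l\<^sup>2 * w / 8))"
    using Hoeffdings_lemma_nn_integral[OF \<open>l > 0\<close>] by (simp add: w_def)
  have "emeasure (Pi_pmf A d (\<lambda>_. q))
          {\<omega>. \<exists>n. t \<le> 0 + (\<Sum>u\<in>set (take n xs). g (\<omega> u) - measure_pmf.expectation q g)}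
        \<le> ennreal (exp (l * (0 - t)) * exp (l\<^sup>2 * w / 8) ^ length xs)"
    using \<open>l > 0\<close> \<open>w > 0\<close> by (intro emeasure_Pi_pmf_prefix_sum_ge[OF assms(1-3) _ _ mgf]) auto
  also have "exp (l * (0 - t)) * exp (l\<^sup>2 * w / 8) ^ length xs = exp (- (2 * t\<^sup>2 / (L * w)))"
    using \<open>L > 0\<close> \<open>w > 0\<close>
    by (simp add: L_def l_def power2_eq_square field_simps flip: exp_of_nat_mult exp_add)
  finally show ?thesis
    by (simp add: L_def w_def measure_pmf.emeasure_eq_measure)
qed

section \<open>The arrival process\<close>

lemma pmf_type_pmf:
  assumes "\<And>i. i \<in> {1..M} \<Longrightarrow> p i \<ge> 0" and "(\<Sum>i=1..M. p i) = 1"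
  shows "pmf (type_pmf M p) x = (if x \<in> {1..M} then p x else 0)"
  unfolding type_pmf_def
proof (rule pmf_embed_pmf)
  have "(\<integral>\<^sup>+x. ennreal (if x \<in> {1..M} then p x else 0) \<partial>count_space UNIV)
        = (\<Sum>x\<in>{1..M}. ennreal (if x \<in> {1..M} then p x else 0))"
    by (rule nn_integral_count_space') auto
  also have "\<dots> = (\<Sum>x\<in>{1..M}. ennreal (p x))"
    by simp
  also have "\<dots> = 1"
    using assms by (subst sum_ennreal) auto
  finally show "(\<integral>\<^sup>+x. ennreal (if x \<in> {1..M} then p x else 0) \<partial>count_space UNIV) = 1" .
qed (use assms in auto)

lemma Ncount_le:
  assumes "0 \<le> j"
  shows "Ncount N init \<omega> i j \<le> N"
proof -
  have "card {k. k < N \<and> \<omega> (nat j, k) = i} \<le> card {..<N}" by (rule card_mono) auto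
  then show ?thesis using assms by (simp add: Ncount_def)
qed

definition count_excess :: "nat \<Rightarrow> (nat \<Rightarrow> int \<Rightarrow> nat) \<Rightarrow> (nat \<Rightarrow> real) \<Rightarrow> (nat \<times> nat \<Rightarrow> nat)
    \<Rightarrow> nat \<Rightarrow> int \<Rightarrow> real" where
  "count_excess N init p \<omega> i j = real (Ncount N init \<omega> i j) - p i * real N"

definition arrival_order :: "nat \<Rightarrow> nat \<Rightarrow> (nat \<times> nat) list" where
  "arrival_order nT N = List.product [0..<nT] [0..<N]"

lemma sum_count_excess_arrivals:
  assumes "m \<le> nT"
  shows "(\<Sum>j\<in>{0..<int m}. count_excess N init p \<omega> i j)
       = (\<Sum>u\<in>set (take (m * N) (arrival_order nT N)). of_bool (\<omega> u = i) - p i)"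
proof -
  have excess: "count_excess N init p \<omega> i (int j) = (\<Sum>k<N. of_bool (\<omega> (j, k) = i) - p i)" for j
  proof -
    have "{k. k < N \<and> \<omega> (j, k) = i} = {..<N} \<inter> {k. \<omega> (j, k) = i}" by auto
    then show ?thesis by (simp add: count_excess_def Ncount_def sum_subtractf)
  qed
  have "(\<Sum>j\<in>{0..<int m}. count_excess N init p \<omega> i j) = (\<Sum>j<m. count_excess N init p \<omega> i (int j))"
    using sum_lessThan_shift_int[where f="count_excess N init p \<omega> i" and n=m and k=0] by simp
  also have "\<dots> = (\<Sum>u\<in>{..<m} \<times> {..<N}. of_bool (\<omega> u = i) - p i)"
    by (simp add: excess sum.cartesian_product case_prod_beta')
  also have "{..<m} \<times> {..<N} = set (take (m * N) (arrival_order nT N))"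
    unfolding arrival_order_def using assms by (rule set_take_product_upt[symmetric])
  finally show ?thesis .
qed

lemma Dproc_eq_initial_plus_arrivals:
  assumes p_sum: "(\<Sum>i=1..M. p i) = 1" and "n \<le> nT"
  shows "Dproc \<epsilon> N M nn init \<omega> n = inverse (real N / \<epsilon>) *
    (\<Sum>i=1..M. (\<Sum>j\<in>{- int (nn i)..<min 0 (int n - int (nn i))}. count_excess N init p \<omega> i j)
      + (\<Sum>u\<in>set (take ((n - nn i) * N) (arrival_order nT N)). of_bool (\<omega> u = i) - p i))"
proof -
  have inner: "- real N + (\<Sum>i=1..M. real (Ncount N init \<omega> i (int j - int (nn i))))
      = (\<Sum>i=1..M. count_excess N init p \<omega> i (int j - int (nn i)))" for j
    using p_sum by (simp add: count_excess_def sum_subtractf flip: sum_distrib_right)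
  have split: "(\<Sum>j\<in>{- int (nn i)..<int n - int (nn i)}. count_excess N init p \<omega> i j)
      = (\<Sum>j\<in>{- int (nn i)..<min 0 (int n - int (nn i))}. count_excess N init p \<omega> i j)
        + (\<Sum>j\<in>{0..<int (n - nn i)}. count_excess N init p \<omega> i j)" for i
  proof -
    have "{- int (nn i)..<int n - int (nn i)}
        = {- int (nn i)..<min 0 (int n - int (nn i))} \<union> {0..<int (n - nn i)}" by auto
    then show ?thesis by (simp add: sum.union_disjoint)
  qed
  have arrivals: "(\<Sum>j\<in>{0..<int (n - nn i)}. count_excess N init p \<omega> i j)
      = (\<Sum>u\<in>set (take ((n - nn i) * N) (arrival_order nT N)). of_bool (\<omega> u = i) - p i)" for i
    using \<open>n \<le> nT\<close> by (intro sum_count_excess_arrivals) simp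
  have "Dproc \<epsilon> N M nn init \<omega> n = inverse (real N / \<epsilon>) *
      (\<Sum>i=1..M. \<Sum>j\<in>{- int (nn i)..<int n - int (nn i)}. count_excess N init p \<omega> i j)"
    unfolding Dproc_def inner sum.swap[of _ "{1..M}"]
    by (intro arg_cong[where f="(*) _"] sum.cong refl sum_lessThan_shift_int)
  then show ?thesis by (simp only: split arrivals)
qed

lemma abs_initial_excess_less:
  assumes "0 < \<epsilon>" and "1 \<le> N" and "0 \<le> p i" and "p i \<le> 1" and "1 \<le> n"
    and init_bound: "\<And>m. 0 < m \<Longrightarrow> m \<le> n \<Longrightarrow>
      \<bar>inverse (real N / \<epsilon>) * (\<Sum>j\<in>{- int k..min 0 (int m - int k)}. count_excess N init p \<omega> i j)\<bar> < \<theta>1"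
  shows "\<bar>inverse (real N / \<epsilon>) * (\<Sum>j\<in>{- int k..<min 0 (int n - int k)}. count_excess N init p \<omega> i j)\<bar>
    < \<theta>1 + \<epsilon>"
proof -
  define G where "G j = inverse (real N / \<epsilon>) * count_excess N init p \<omega> i j" for j
  have G_eq: "G j = \<epsilon> / real N * real (Ncount N init \<omega> i j) - p i * \<epsilon>" for j
    using \<open>1 \<le> N\<close> by (simp add: G_def count_excess_def field_simps)
  have "- \<epsilon> \<le> G j" for j
  proof -
    have "0 \<le> \<epsilon> / real N * real (Ncount N init \<omega> i j)" using \<open>0 < \<epsilon>\<close> by simp
    moreover have "p i * \<epsilon> \<le> 1 * \<epsilon>" using \<open>0 < \<epsilon>\<close> \<open>p i \<le> 1\<close> by (intro mult_right_mono) auto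
    ultimately show ?thesis unfolding G_eq by linarith
  qed
  moreover have "G j \<le> \<epsilon>" if "0 \<le> j" for j
  proof -
    have "\<epsilon> / real N * real (Ncount N init \<omega> i j) \<le> \<epsilon> / real N * real N"
      using Ncount_le[OF that] \<open>0 < \<epsilon>\<close> by (intro mult_left_mono) auto
    moreover have "0 \<le> p i * \<epsilon>" using \<open>0 < \<epsilon>\<close> \<open>0 \<le> p i\<close> by simp
    ultimately show ?thesis using \<open>1 \<le> N\<close> unfolding G_eq by simp
  qed
  moreover have "\<bar>\<Sum>j\<in>{- int k..min 0 (int m - int k)}. G j\<bar> < \<theta>1" if "0 < m" "m \<le> n" for m
    using init_bound[OF that] by (simp add: G_def sum_distrib_left)
  ultimately have "\<bar>\<Sum>j\<in>{- int k..<min 0 (int n - int k)}. G j\<bar> < \<theta>1 + \<epsilon>"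
    using \<open>1 \<le> n\<close> by (rule abs_sum_halfopen_window_less[rotated])
  then show ?thesis by (simp add: G_def sum_distrib_left)
qed

definition prefix_excess_event :: "nat \<Rightarrow> nat \<Rightarrow> (nat \<Rightarrow> real) \<Rightarrow> nat \<Rightarrow> real \<Rightarrow> real
    \<Rightarrow> (nat \<times> nat \<Rightarrow> nat) set" where
  "prefix_excess_event nT N p i \<sigma> t =
     {\<omega>. \<exists>m. t \<le> \<sigma> * (\<Sum>u\<in>set (take m (arrival_order nT N)). of_bool (\<omega> u = i) - p i)}"

lemma prob_prefix_excess_event_le:
  assumes "\<And>i. i \<in> {1..M} \<Longrightarrow> 0 \<le> p i" and "(\<Sum>i=1..M. p i) = 1"
    and "i \<in> {1..M}" and \<sigma>: "\<sigma> \<in> {1, -1}" and "1 \<le> nT" and "1 \<le> N" and "0 < t"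
  shows "measure_pmf.prob (arrival_space nT N M p) (prefix_excess_event nT N p i \<sigma> t)
           \<le> exp (- (2 * t\<^sup>2 / (real nT * real N)))"
proof -
  let ?g = "\<lambda>y. \<sigma> * of_bool (y = i)"
  have "?g = (\<lambda>y. \<sigma> * indicator {i} y)" by (auto simp: indicator_def)
  then have "measure_pmf.expectation (type_pmf M p) ?g = \<sigma> * pmf (type_pmf M p) i"
    by (simp add: measure_pmf_single)
  also have "pmf (type_pmf M p) i = p i" using pmf_type_pmf assms(1-3) by simp
  finally have E: "measure_pmf.expectation (type_pmf M p) ?g = \<sigma> * p i" .
  have "arrival_order nT N \<noteq> []"
    using \<open>1 \<le> nT\<close> \<open>1 \<le> N\<close> by (simp add: arrival_order_def flip: length_greater_0_conv)
  have "prefix_excess_event nT N p i \<sigma> t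
      = {\<omega>. \<exists>m. t \<le> (\<Sum>u\<in>set (take m (arrival_order nT N)).
                     ?g (\<omega> u) - measure_pmf.expectation (type_pmf M p) ?g)}"
    unfolding E by (simp add: prefix_excess_event_def sum_distrib_left right_diff_distrib)
  also have "measure_pmf.prob (arrival_space nT N M p) \<dots>
      \<le> exp (- (2 * t\<^sup>2 / (real (length (arrival_order nT N)) * (max 0 \<sigma> - min 0 \<sigma>)\<^sup>2)))"
    unfolding arrival_space_def using \<sigma> \<open>arrival_order nT N \<noteq> []\<close> \<open>0 < t\<close>
    by (intro prob_Pi_pmf_prefix_sum_ge_Hoeffding) (auto simp: arrival_order_def distinct_product)
  finally show ?thesis using \<sigma> by (auto simp: arrival_order_def)
qed

lemma Dproc_large_imp_prefix_excess:
  assumes "0 < \<epsilon>" and "1 \<le> N" and "1 \<le> M"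
    and p_nonneg: "\<And>i. i \<in> {1..M} \<Longrightarrow> 0 \<le> p i" and p_sum: "(\<Sum>i=1..M. p i) = 1"
    and "4 * \<epsilon> \<le> \<theta>" and "1 \<le> n" and "n \<le> nT"
    and init_bound: "\<And>i m. i \<in> {1..M} \<Longrightarrow> 0 < m \<Longrightarrow> m \<le> n \<Longrightarrow>
      \<bar>inverse (real N / \<epsilon>) *
        (\<Sum>j\<in>{- int (nn i)..min 0 (int m - int (nn i))}. count_excess N init p \<omega> i j)\<bar> < \<theta>1"
    and large: "real M * \<theta> + real M * \<theta>1 \<le> \<bar>Dproc \<epsilon> N M nn init \<omega> n\<bar>"
  shows "\<exists>i\<in>{1..M}. \<exists>\<sigma>\<in>{1, -1}. \<omega> \<in> prefix_excess_event nT N p i \<sigma> (3 * \<theta> * real N / (4 * \<epsilon>))"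
proof -
  define c where "c = inverse (real N / \<epsilon>)"
  define I where
    "I i = c * (\<Sum>j\<in>{- int (nn i)..<min 0 (int n - int (nn i))}. count_excess N init p \<omega> i j)" for i
  define F where
    "F i = (\<Sum>u\<in>set (take ((n - nn i) * N) (arrival_order nT N)). of_bool (\<omega> u = i) - p i)" for i
  have c_pos: "0 < c" using \<open>0 < \<epsilon>\<close> \<open>1 \<le> N\<close> by (simp add: c_def)
  have "Dproc \<epsilon> N M nn init \<omega> n = (\<Sum>i=1..M. I i + c * F i)"
    using Dproc_eq_initial_plus_arrivals[OF p_sum \<open>n \<le> nT\<close>]
    by (simp add: I_def F_def c_def sum_distrib_left distrib_left)
  then have large_sum: "real (card {1..M}) * ((\<theta>1 + \<theta> / 4) + 3 * \<theta> / 4)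
      \<le> \<bar>\<Sum>i=1..M. I i + c * F i\<bar>"
    using large by (simp add: algebra_simps)
  have I_bound: "\<bar>I i\<bar> \<le> \<theta>1 + \<theta> / 4" if "i \<in> {1..M}" for i
  proof -
    have "p i \<le> (\<Sum>i=1..M. p i)" using p_nonneg that by (intro member_le_sum) auto
    then have "\<bar>I i\<bar> < \<theta>1 + \<epsilon>"
      unfolding I_def c_def using p_sum
      by (intro abs_initial_excess_less[OF \<open>0 < \<epsilon>\<close> \<open>1 \<le> N\<close> p_nonneg[OF that] _ \<open>1 \<le> n\<close>
            init_bound[OF that]]) simp
    then show ?thesis using \<open>4 * \<epsilon> \<le> \<theta>\<close> by linarith
  qed
  have "{1..M} \<noteq> {}" using \<open>1 \<le> M\<close> by simp
  then obtain i where i: "i \<in> {1..M}" and "3 * \<theta> / 4 \<le> \<bar>c * F i\<bar>"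
    using exists_abs_summand_ge[OF finite_atLeastAtMost _ I_bound large_sum] by blast
  then have F_large: "3 * \<theta> * real N / (4 * \<epsilon>) \<le> \<bar>F i\<bar>"
    using c_pos \<open>0 < \<epsilon>\<close> \<open>1 \<le> N\<close> by (simp add: c_def abs_mult field_simps)
  have "\<exists>\<sigma>\<in>{1, -1}. 3 * \<theta> * real N / (4 * \<epsilon>) \<le> \<sigma> * F i"
  proof (cases "0 \<le> F i")
    case True
    then show ?thesis using F_large by (intro bexI[of _ 1]) auto
  next
    case False
    then show ?thesis using F_large by (intro bexI[of _ "-1"]) auto
  qed
  then show ?thesis using i unfolding prefix_excess_event_def F_def by blast
qed

lemma large_Dproc_subset_prefix_excess_events:
  assumes "0 < \<epsilon>" and "1 \<le> N" and "1 \<le> M" and "1 \<le> nT"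
    and p_nonneg: "\<And>i. i \<in> {1..M} \<Longrightarrow> 0 \<le> p i" and p_sum: "(\<Sum>i=1..M. p i) = 1"
    and "4 * \<epsilon> \<le> \<theta>"
    and init_bound: "\<And>\<omega> i n. \<omega> \<in> set_pmf (arrival_space nT N M p) \<Longrightarrow> i \<in> {1..M} \<Longrightarrow>
        0 < n \<Longrightarrow> n \<le> nT \<Longrightarrow>
        \<bar>inverse (real N / \<epsilon>) *
          (\<Sum>j\<in>{- int (nn i)..min 0 (int n - int (nn i))}.
             real (Ncount N init \<omega> i j) - p i * real N)\<bar> < \<theta>1"
  shows "{\<omega>. (MAX n\<in>{1..nT}. \<bar>Dproc \<epsilon> N M nn init \<omega> n\<bar>) \<ge> real M * \<theta> + real M * \<theta>1}
           \<inter> set_pmf (arrival_space nT N M p)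
         \<subseteq> (\<Union>(i, \<sigma>)\<in>{1..M} \<times> {1, -1}. prefix_excess_event nT N p i \<sigma> (3 * \<theta> * real N / (4 * \<epsilon>)))"
proof clarify
  fix \<omega>
  assume \<omega>: "\<omega> \<in> set_pmf (arrival_space nT N M p)"
    and "real M * \<theta> + real M * \<theta>1 \<le> (MAX n\<in>{1..nT}. \<bar>Dproc \<epsilon> N M nn init \<omega> n\<bar>)"
  then obtain n where "n \<in> {1..nT}"
    and "real M * \<theta> + real M * \<theta>1 \<le> \<bar>Dproc \<epsilon> N M nn init \<omega> n\<bar>"
    using \<open>1 \<le> nT\<close> by (subst (asm) Max_ge_iff) auto
  moreover have "\<bar>inverse (real N / \<epsilon>) *
        (\<Sum>j\<in>{- int (nn i)..min 0 (int m - int (nn i))}. count_excess N init p \<omega> i j)\<bar> < \<theta>1"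
    if "i \<in> {1..M}" "0 < m" "m \<le> n" for i m
    using init_bound[OF \<omega> that(1,2)] that(3) \<open>n \<in> {1..nT}\<close> by (simp add: count_excess_def)
  ultimately show "\<omega> \<in> (\<Union>(i, \<sigma>)\<in>{1..M} \<times> {1, -1}. prefix_excess_event nT N p i \<sigma> (3 * \<theta> * real N / (4 * \<epsilon>)))"
    using Dproc_large_imp_prefix_excess[OF assms(1-3) p_nonneg p_sum \<open>4 * \<epsilon> \<le> \<theta>\<close>] by fastforce
qed

lemma prob_large_Dproc_le:
  assumes "0 < \<epsilon>" and "1 \<le> N" and "1 \<le> M" and "1 \<le> nT"
    and p_nonneg: "\<And>i. i \<in> {1..M} \<Longrightarrow> 0 \<le> p i" and p_sum: "(\<Sum>i=1..M. p i) = 1"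
    and "4 * \<epsilon> \<le> \<theta>"
    and init_bound: "\<And>\<omega> i n. \<omega> \<in> set_pmf (arrival_space nT N M p) \<Longrightarrow> i \<in> {1..M} \<Longrightarrow>
        0 < n \<Longrightarrow> n \<le> nT \<Longrightarrow>
        \<bar>inverse (real N / \<epsilon>) *
          (\<Sum>j\<in>{- int (nn i)..min 0 (int n - int (nn i))}.
             real (Ncount N init \<omega> i j) - p i * real N)\<bar> < \<theta>1"
  shows "measure_pmf.prob (arrival_space nT N M p)
           {\<omega>. (MAX n\<in>{1..nT}. \<bar>Dproc \<epsilon> N M nn init \<omega> n\<bar>) \<ge> real M * \<theta> + real M * \<theta>1}
         \<le> 2 * real M * exp (- (9 * \<theta>\<^sup>2 * real N / (8 * \<epsilon>\<^sup>2 * real nT)))"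
proof -
  let ?P = "arrival_space nT N M p"
  let ?bound = "exp (- (9 * \<theta>\<^sup>2 * real N / (8 * \<epsilon>\<^sup>2 * real nT)))"
  define t where "t = 3 * \<theta> * real N / (4 * \<epsilon>)"
  define E where "E = (\<lambda>(i, \<sigma>). prefix_excess_event nT N p i \<sigma> t)"
  have "0 < t" using assms(1,2,7) by (simp add: t_def)
  have "2 * t\<^sup>2 / (real nT * real N) = 9 * \<theta>\<^sup>2 * real N / (8 * \<epsilon>\<^sup>2 * real nT)"
    using assms(1,2,4) by (simp add: t_def field_simps power2_eq_square)
  then have prob_le: "measure_pmf.prob ?P (prefix_excess_event nT N p i \<sigma> t) \<le> ?bound"
    if "i \<in> {1..M}" and "\<sigma> \<in> {1, -1}" for i \<sigma>
    using prob_prefix_excess_event_le[OF p_nonneg p_sum that \<open>1 \<le> nT\<close> \<open>1 \<le> N\<close> \<open>0 < t\<close>] by simp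
  have "measure_pmf.prob ?P {\<omega>. (MAX n\<in>{1..nT}. \<bar>Dproc \<epsilon> N M nn init \<omega> n\<bar>) \<ge> real M * \<theta> + real M * \<theta>1}
      \<le> measure_pmf.prob ?P (\<Union> (E ` ({1..M} \<times> {1, -1})))"
    using large_Dproc_subset_prefix_excess_events[OF assms] unfolding E_def t_def
    by (subst measure_Int_set_pmf[symmetric]) (intro measure_pmf.finite_measure_mono, auto)
  also have "\<dots> \<le> (\<Sum>x\<in>{1..M} \<times> {1, -1}. measure_pmf.prob ?P (E x))"
    by (intro measure_pmf.finite_measure_subadditive_finite) auto
  also have "\<dots> \<le> (\<Sum>_\<in>{1..M} \<times> {1, -1 :: real}. ?bound)"
    using prob_le by (intro sum_mono) (auto simp: E_def)
  also have "\<dots> = 2 * real M * ?bound" by simp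
  finally show ?thesis .
qed

lemma tail_bound_ge_1_if_theta_small:
  fixes \<epsilon> T \<theta> :: real
  assumes "0 < \<epsilon>" and "\<epsilon> \<le> T" and "0 < \<theta>" and "\<theta> < 4 * \<epsilon>" and "1 \<le> M"
  shows "1 \<le> 2 * real M * exp (- (\<theta>\<^sup>2 / (32 * T * \<epsilon>)))"
proof -
  have "\<theta>\<^sup>2 \<le> (4 * \<epsilon>)\<^sup>2" using assms by (intro power_mono) auto
  also have "\<dots> \<le> 16 * T * \<epsilon>" using assms by (simp add: power2_eq_square)
  finally have "\<theta>\<^sup>2 / (32 * T * \<epsilon>) \<le> 1 / 2" using assms by (simp add: field_simps)
  then have "exp (- (1 / 2)) \<le> exp (- (\<theta>\<^sup>2 / (32 * T * \<epsilon>)))" by simp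
  moreover have "1 / 2 \<le> exp (- (1 / 2) :: real)" using exp_ge_add_one_self[of "- (1 / 2) :: real"] by simp
  ultimately have "1 \<le> 2 * exp (- (\<theta>\<^sup>2 / (32 * T * \<epsilon>)))" by linarith
  also have "\<dots> \<le> 2 * real M * exp (- (\<theta>\<^sup>2 / (32 * T * \<epsilon>)))" using \<open>1 \<le> M\<close> by simp
  finally show ?thesis .
qed

theorem lemma8p2:
  fixes \<epsilon> T \<theta> \<theta>1 :: real and N nT M :: nat
    and h :: "nat \<Rightarrow> real" and nn :: "nat \<Rightarrow> nat" and p :: "nat \<Rightarrow> real"
    and init :: "nat \<Rightarrow> int \<Rightarrow> nat"
  assumes eps: "\<epsilon> > 0" and N: "N \<ge> 1"
    and T: "T > 0" and nT: "real nT = T / \<epsilon>"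
    and M: "M \<ge> 1"
    and h_pos: "\<And>i. i \<in> {1..M} \<Longrightarrow> h i > 0"
    and h_mono: "\<And>i j. i \<in> {1..M} \<Longrightarrow> j \<in> {1..M} \<Longrightarrow> i < j \<Longrightarrow> h i < h j"
    and h_nn: "\<And>i. i \<in> {1..M} \<Longrightarrow> h i = real (nn i) * \<epsilon>"
    and p_pos: "\<And>i. i \<in> {1..M} \<Longrightarrow> p i > 0"
    and p_sum: "(\<Sum>i=1..M. p i) = 1"
    and \<theta>: "\<theta> > 0" and \<theta>1: "\<theta>1 > 0"
    and init_bound: "\<And>\<omega> i n. \<omega> \<in> set_pmf (arrival_space nT N M p) \<Longrightarrow> i \<in> {1..M} \<Longrightarrow>
        0 < n \<Longrightarrow> n \<le> nT \<Longrightarrow>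
        \<bar>inverse (real N / \<epsilon>) *
          (\<Sum>j\<in>{- int (nn i)..min 0 (int n - int (nn i))}.
             real (Ncount N init \<omega> i j) - p i * real N)\<bar> < \<theta>1"
  shows "measure_pmf.prob (arrival_space nT N M p)
           {\<omega>. (MAX n\<in>{1..nT}. \<bar>Dproc \<epsilon> N M nn init \<omega> n\<bar>) \<ge> real M * \<theta> + real M * \<theta>1}
         \<le> 2 * real M * exp (- (\<theta>^2 / (32 * T * \<epsilon>)))"
proof -
  have T_eq: "T = real nT * \<epsilon>" using nT eps by (simp add: field_simps)
  have "0 < real nT" using nT T eps by simp
  then have "1 \<le> nT" by simp
  have p_nonneg: "\<And>i. i \<in> {1..M} \<Longrightarrow> 0 \<le> p i" using p_pos by (simp add: less_imp_le)
  show ?thesis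
  proof (cases "\<theta> < 4 * \<epsilon>")
    case True
    have "\<epsilon> \<le> T" using T_eq \<open>1 \<le> nT\<close> eps by simp
    then show ?thesis using tail_bound_ge_1_if_theta_small[OF eps _ \<theta> True M] measure_pmf.prob_le_1
      by (meson order.trans)
  next
    case False
    have "exp (- (9 * \<theta>\<^sup>2 * real N / (8 * \<epsilon>\<^sup>2 * real nT))) \<le> exp (- (\<theta>^2 / (32 * T * \<epsilon>)))"
      using eps N \<open>1 \<le> nT\<close> \<theta> unfolding T_eq by (simp add: field_simps power2_eq_square)
    then have "2 * real M * exp (- (9 * \<theta>\<^sup>2 * real N / (8 * \<epsilon>\<^sup>2 * real nT)))
        \<le> 2 * real M * exp (- (\<theta>^2 / (32 * T * \<epsilon>)))"
      by (intro mult_left_mono) auto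
    with prob_large_Dproc_le[OF eps N M \<open>1 \<le> nT\<close> p_nonneg p_sum False[unfolded not_less] init_bound]
    show ?thesis by linarith
  qed
qed

end
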